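(* Under the event-triggered closed loop described in the context, for all $j$ and all $t\in(t_j,t_{j+1})$, $$\dot d(t)^2\le\rho_1d^2(t)+\alpha_1\|\hat w[t]\|^2+\alpha_2|\hat w(1,t)|^2+\alpha_3|\tilde w(0,t)|^2,$$ where $\rho_1=6\varepsilon^2k(1)^2$, $\alpha_1=3\Big(1+\big(\int_0^1\int_0^xL^2(x,y)dydx\big)^{1/2}\Big)^2\int_0^1\big(\varepsilon k''(y)+\varepsilon k(1)k(y)+\lambda k(y)\big)^2dy+6\big(\varepsilon qk(1)+\varepsilon k'(1)\big)^2\int_0^1L^2(1,y)dy$, $\alpha_2=6\big(\varepsilon qk(1)+\varepsilon k'(1)\big)^2$, and $\alpha_3=6\Big(\frac{\lambda k(0)}{2}+\int_0^1k(y)p_1(y)dy\Big)^2$.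
   Context: Setup. $\varepsilon,\lambda>0$, $q>(\lambda+\varepsilon)/(2\varepsilon)$, $r=q-\lambda/(2\varepsilon)$. $I_m,J_m$ are the modified and ordinary Bessel functions of the first kind (with $I_1(z)/z,J_1(z)/z\to1/2$ at $z=0$). Kernels on $0\le y\le x\le1$: $P(x,y)=\frac{q\lambda/\varepsilon}{\sqrt{\lambda/\varepsilon+q^2}}\int_0^{x-y}e^{-q\tau/2}I_0\big(\sqrt{\lambda(2-x-y)(x-y-\tau)/\varepsilon}\big)\sinh\big(\tfrac{\sqrt{\lambda/\varepsilon+q^2}}{2}\tau\big)d\tau-\frac{\lambda}{\varepsilon}(1-y)\frac{I_1(\sqrt{\lambda((1-y)^2-(1-x)^2)/\varepsilon})}{\sqrt{\lambda((1-y)^2-(1-x)^2)/\varepsilon}}$; $Q(x,y)=\frac{q\lambda/\varepsilon}{\sqrt{q^2-\lambda/\varepsilon}}\int_0^{x-y}e^{-q\tau/2}J_0\big(\sqrt{\lambda(2-x-y)(x-y-\tau)/\varepsilon}\big)\sinh\big(\tfrac{\sqrt{q^2-\lambda/\varepsilon}}{2}\tau\big)d\tau-\frac{\lambda}{\varepsilon}(1-y)\frac{J_1(\sqrt{\lambda((1-y)^2-(1-x)^2)/\varepsilon})}{\sqrt{\lambda((1-y)^2-(1-x)^2)/\varepsilon}}$; $K(x,y)=-\frac{\lambda}{\varepsilon}x\frac{I_1(\sqrt{\lambda(x^2-y^2)/\varepsilon})}{\sqrt{\lambda(x^2-y^2)/\varepsilon}}$, $L(x,y)=-\frac{\lambda}{\varepsilon}x\frac{J_1(\sqrt{\lambda(x^2-y^2)/\varepsilon})}{\sqrt{\lambda(x^2-y^2)/\varepsilon}}$.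 Gains $p_1(x)=\varepsilon P_y(x,0)$, $p_{10}=-\lambda/(2\varepsilon)$. Let $k(y)=rK(1,y)+K_x(1,y)$. Closed loop: plant $u_t=\varepsilon u_{xx}+\lambda u$, $u_x(0,t)=0$, $u_x(1,t)+qu(1,t)=U_j$; observer $\hat u_t=\varepsilon\hat u_{xx}+\lambda\hat u+p_1(x)(u(0,t)-\hat u(0,t))$, $\hat u_x(0,t)=p_{10}(u(0,t)-\hat u(0,t))$, $\hat u_x(1,t)+q\hat u(1,t)=U_j$, for $t\in[t_j,t_{j+1})$, with $U_j=\int_0^1k(y)\hat u(y,t_j)dy$. Set $\tilde u=u-\hat u$, $\tilde w(x,t)=\tilde u(x,t)+\int_0^xQ(x,y)\tilde u(y,t)dy$, $\hat w(x,t)=\hat u(x,t)-\int_0^xK(x,y)\hat u(y,t)dy$. The input holding error is $d(t)=\int_0^1k(y)(\hat u(y,t_j)-\hat u(y,t))dy$ for $t\in[t_j,t_{j+1})$, where $0=t_0<t_1<\dots$ is any increasing sequence of update times (e.g. the one generated by the event trigger). *)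

theory Defs
  imports "HOL-Analysis.Analysis"
begin

text \<open>Bessel functions. In the paper they only occur in the combinations
 I_0(sqrt s), I_1(sqrt s)/sqrt s, J_0(sqrt s), J_1(sqrt s)/sqrt s (with value 1/2 at 0 for
 the quotients). We define these combinations through the power series of the Bessel
 functions, as entire functions of s (series in s = z^2).\<close>

definition besselI0_sqrt :: "real \<Rightarrow> real" where
  "besselI0_sqrt s = (\<Sum>n. (s/4)^n / (fact n)^2)"

definition besselI1_div_sqrt :: "real \<Rightarrow> real" where
  "besselI1_div_sqrt s = (\<Sum>n. (s/4)^n / (2 * fact n * fact (Suc n)))"

definition besselJ0_sqrt :: "real \<Rightarrow> real" where
  "besselJ0_sqrt s = (\<Sum>n. (-s/4)^n / (fact n)^2)"

definition besselJ1_div_sqrt :: "real \<Rightarrow> real" where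
  "besselJ1_div_sqrt s = (\<Sum>n. (-s/4)^n / (2 * fact n * fact (Suc n)))"

definition kerP :: "real \<Rightarrow> real \<Rightarrow> real \<Rightarrow> real \<Rightarrow> real \<Rightarrow> real" where
  "kerP eps lam q x y =
     (q * lam / eps) / sqrt (lam / eps + q^2) *
       integral {0..x - y} (\<lambda>\<tau>. exp (- q * \<tau> / 2)
          * besselI0_sqrt (lam * (2 - x - y) * (x - y - \<tau>) / eps)
          * sinh (sqrt (lam / eps + q^2) / 2 * \<tau>))
     - lam / eps * (1 - y) * besselI1_div_sqrt (lam * ((1 - y)^2 - (1 - x)^2) / eps)"

definition kerQ :: "real \<Rightarrow> real \<Rightarrow> real \<Rightarrow> real \<Rightarrow> real \<Rightarrow> real" where
  "kerQ eps lam q x y =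
     (q * lam / eps) / sqrt (q^2 - lam / eps) *
       integral {0..x - y} (\<lambda>\<tau>. exp (- q * \<tau> / 2)
          * besselJ0_sqrt (lam * (2 - x - y) * (x - y - \<tau>) / eps)
          * sinh (sqrt (q^2 - lam / eps) / 2 * \<tau>))
     - lam / eps * (1 - y) * besselJ1_div_sqrt (lam * ((1 - y)^2 - (1 - x)^2) / eps)"

definition kerK :: "real \<Rightarrow> real \<Rightarrow> real \<Rightarrow> real \<Rightarrow> real" where
  "kerK eps lam x y = - (lam / eps) * x * besselI1_div_sqrt (lam * (x^2 - y^2) / eps)"

definition kerL :: "real \<Rightarrow> real \<Rightarrow> real \<Rightarrow> real \<Rightarrow> real" where
  "kerL eps lam x y = - (lam / eps) * x * besselJ1_div_sqrt (lam * (x^2 - y^2) / eps)"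

definition rpar :: "real \<Rightarrow> real \<Rightarrow> real \<Rightarrow> real" where
  "rpar eps lam q = q - lam / (2 * eps)"

definition kgain :: "real \<Rightarrow> real \<Rightarrow> real \<Rightarrow> real \<Rightarrow> real" where
  "kgain eps lam q y = rpar eps lam q * kerK eps lam 1 y + deriv (\<lambda>x. kerK eps lam x y) 1"

definition p1gain :: "real \<Rightarrow> real \<Rightarrow> real \<Rightarrow> real \<Rightarrow> real" where
  "p1gain eps lam q x = eps * deriv (\<lambda>y. kerP eps lam q x y) 0"

definition p10gain :: "real \<Rightarrow> real \<Rightarrow> real" where
  "p10gain eps lam = - lam / (2 * eps)"

end

(*
  The holding error is d(t) = int_0^1 k(y) (uh(y,t_j) - uh(y,t)) dy, so d' = - int_0^1 k uh_t.
  Substituting the observer equation and integrating by parts twice moves both x-derivatives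
  onto the gain. Since k'(0) = 0, uh_x(0) = -lam/(2 eps) e0 with e0 = u(0) - uh(0) = wt(0), and
  uh_x(1) + q uh(1) = U_j = d + int_0^1 k uh, this gives
    - d' = eps k(1) d + int_0^1 (eps k'' + eps k(1) k + lam k) uh
           - (eps q k(1) + eps k'(1)) uh(1) + (lam k(0)/2 + int_0^1 k p1) e0.
  Squaring with (a + b + c + e)^2 <= 6 a^2 + 3 b^2 + 3 c^2 + 6 e^2 and Cauchy-Schwarz leaves the
  L2 norm of uh and uh(1)^2 to be bounded in terms of wh. This follows from the inverse
  transformation uh(x) = wh(x) + int_0^x L(x,y) wh(y) dy, that is, from the resolvent identity
  L(x,z) - int_z^x L(x,y) K(y,z) dy = K(x,z). After the substitution w = lam/eps (y^2 - z^2)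
  the latter becomes the convolution identity int_0^T J(T - v) I(v) dv = 2 (I(T) - J(T)) for the
  entire functions I(s) = I_1(sqrt s)/sqrt s and J(s) = J_1(sqrt s)/sqrt s, which is checked on
  their power series with the Beta integral and an alternating binomial sum.
*)

theory Submission
  imports Defs
begin

section \<open>Power series with infinite radius of convergence\<close>

definition pseries :: "(nat \<Rightarrow> real) \<Rightarrow> real \<Rightarrow> real" where
  "pseries c x = (\<Sum>n. c n * x^n)"

definition entire_coeffs :: "(nat \<Rightarrow> real) \<Rightarrow> bool" where
  "entire_coeffs c \<longleftrightarrow> (\<forall>x. summable (\<lambda>n. c n * x^n))"

lemma entire_coeffs_diffs [intro]: "entire_coeffs c \<Longrightarrow> entire_coeffs (diffs c)"
  unfolding entire_coeffs_def by (blast intro: termdiff_converges_all)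

lemma sums_pseries: "entire_coeffs c \<Longrightarrow> (\<lambda>n. c n * x^n) sums pseries c x"
  unfolding entire_coeffs_def pseries_def by (simp add: summable_sums)

lemma pseries_has_real_derivative: "entire_coeffs c \<Longrightarrow> (pseries c has_real_derivative pseries (diffs c) x) (at x)"
  unfolding entire_coeffs_def pseries_def fun_eq_iff
  by (rule termdiffs_strong_converges_everywhere) blast

lemma pseries_has_real_derivative_chain [derivative_intros]:
  "entire_coeffs c \<Longrightarrow> (f has_real_derivative f') (at x within S) \<Longrightarrow>
   ((\<lambda>x. pseries c (f x)) has_real_derivative pseries (diffs c) (f x) * f') (at x within S)"
  by (rule DERIV_chain2[OF pseries_has_real_derivative])

lemma continuous_on_pseries [continuous_intros]:
  "entire_coeffs c \<Longrightarrow> continuous_on S f \<Longrightarrow> continuous_on S (\<lambda>x. pseries c (f x))"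
  by (rule continuous_on_compose2[of UNIV "pseries c"])
     (auto intro: continuous_at_imp_continuous_on DERIV_isCont pseries_has_real_derivative)

lemma entire_coeffsI_inverse_fact:
  assumes "\<And>n. \<bar>c n\<bar> \<le> 1 / fact n"
  shows "entire_coeffs c"
  unfolding entire_coeffs_def
proof
  fix x :: real
  show "summable (\<lambda>n. c n * x^n)"
  proof (rule summable_comparison_test')
    show "summable (\<lambda>n. inverse (fact n) * \<bar>x\<bar>^n)" by (rule summable_exp)
    show "norm (c n * x^n) \<le> inverse (fact n) * \<bar>x\<bar>^n" for n
      using assms[of n] by (simp add: abs_mult power_abs divide_inverse mult_right_mono)
  qed
qed

section \<open>The Bessel series, the backstepping kernels and the gain\<close>

definition besselI1_coeff :: "nat \<Rightarrow> real" where
  "besselI1_coeff n = (1/4)^n / (2 * fact n * fact (Suc n))"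

definition besselJ1_coeff :: "nat \<Rightarrow> real" where
  "besselJ1_coeff n = (-1/4)^n / (2 * fact n * fact (Suc n))"

lemma besselI1_coeff_nonneg: "besselI1_coeff n \<ge> 0"
  by (simp add: besselI1_coeff_def)

lemma besselJ1_coeff_eq: "besselJ1_coeff n = (-1)^n * besselI1_coeff n"
  by (simp add: besselJ1_coeff_def besselI1_coeff_def power_minus' power_divide)

lemma besselI1_coeff_le: "besselI1_coeff n \<le> 1 / fact n"
proof -
  have "(1/4::real)^n \<le> 1" by (simp add: power_le_one)
  moreover have "(1::real) \<le> 2 * fact (Suc n)" using fact_ge_1[of "Suc n", where 'a=real] by linarith
  ultimately have "(1/4::real)^n / (2 * fact (Suc n)) \<le> 1" by (simp add: divide_le_eq)
  then have "(1/4::real)^n / (2 * fact (Suc n)) / fact n \<le> 1 / fact n"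
    by (intro divide_right_mono) auto
  then show ?thesis by (simp add: besselI1_coeff_def field_simps)
qed

lemma entire_besselI1_coeff [intro]: "entire_coeffs besselI1_coeff"
  by (rule entire_coeffsI_inverse_fact)
     (simp add: besselI1_coeff_le besselI1_coeff_nonneg)

lemma entire_besselJ1_coeff [intro]: "entire_coeffs besselJ1_coeff"
  by (rule entire_coeffsI_inverse_fact)
     (simp add: besselJ1_coeff_eq abs_mult besselI1_coeff_le besselI1_coeff_nonneg)

lemma besselI1_div_sqrt_eq_pseries: "besselI1_div_sqrt = pseries besselI1_coeff"
  by (auto simp: fun_eq_iff besselI1_div_sqrt_def pseries_def besselI1_coeff_def field_simps)

lemma besselJ1_div_sqrt_eq_pseries: "besselJ1_div_sqrt = pseries besselJ1_coeff"
  by (auto simp: fun_eq_iff besselJ1_div_sqrt_def pseries_def besselJ1_coeff_def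
      field_simps power_minus')

definition kernelK :: "real \<Rightarrow> real \<Rightarrow> real \<Rightarrow> real" where
  "kernelK s x y = - s * x * pseries besselI1_coeff (s * (x^2 - y^2))"

definition kernelL :: "real \<Rightarrow> real \<Rightarrow> real \<Rightarrow> real" where
  "kernelL s x y = - s * x * pseries besselJ1_coeff (s * (x^2 - y^2))"

lemma kerK_eq_kernelK: "kerK eps lam = kernelK (lam / eps)"
  by (simp add: fun_eq_iff kerK_def besselI1_div_sqrt_eq_pseries kernelK_def)

lemma kerL_eq_kernelL: "kerL eps lam = kernelL (lam / eps)"
  by (simp add: fun_eq_iff kerL_def besselJ1_div_sqrt_eq_pseries kernelL_def)

lemma continuous_on_kernelK [continuous_intros]:
  "continuous_on S f \<Longrightarrow> continuous_on S g \<Longrightarrow> continuous_on S (\<lambda>x. kernelK s (f x) (g x))"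
  unfolding kernelK_def by (intro continuous_intros entire_besselI1_coeff)

lemma continuous_on_kernelL [continuous_intros]:
  "continuous_on S f \<Longrightarrow> continuous_on S g \<Longrightarrow> continuous_on S (\<lambda>x. kernelL s (f x) (g x))"
  unfolding kernelL_def by (intro continuous_intros entire_besselJ1_coeff)

definition gain :: "real \<Rightarrow> real \<Rightarrow> real \<Rightarrow> real" where
  "gain s r y = - s * ((r + 1) * pseries besselI1_coeff (s * (1 - y^2))
      + 2 * s * pseries (diffs besselI1_coeff) (s * (1 - y^2)))"

definition gain' :: "real \<Rightarrow> real \<Rightarrow> real \<Rightarrow> real" where
  "gain' s r y = 2 * s^2 * y * ((r + 1) * pseries (diffs besselI1_coeff) (s * (1 - y^2))
      + 2 * s * pseries (diffs (diffs besselI1_coeff)) (s * (1 - y^2)))"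

definition gain'' :: "real \<Rightarrow> real \<Rightarrow> real \<Rightarrow> real" where
  "gain'' s r y = 2 * s^2 * ((r + 1) * pseries (diffs besselI1_coeff) (s * (1 - y^2))
      + 2 * s * pseries (diffs (diffs besselI1_coeff)) (s * (1 - y^2)))
    - 4 * s^3 * y^2 * ((r + 1) * pseries (diffs (diffs besselI1_coeff)) (s * (1 - y^2))
      + 2 * s * pseries (diffs (diffs (diffs besselI1_coeff))) (s * (1 - y^2)))"

lemma kgain_eq_gain: "kgain eps lam q = gain (lam / eps) (rpar eps lam q)"
proof
  fix y
  define s where "s = lam / eps"
  have "((\<lambda>x. kernelK s x y) has_real_derivative
      - s * (pseries besselI1_coeff (s * (1 - y^2))
        + pseries (diffs besselI1_coeff) (s * (1 - y^2)) * (2 * s))) (at 1)"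
    unfolding kernelK_def by (auto intro!: derivative_eq_intros simp: field_simps)
  then show "kgain eps lam q y = gain s (rpar eps lam q) y"
    by (simp add: kgain_def kerK_eq_kernelK s_def[symmetric] DERIV_imp_deriv kernelK_def gain_def
        algebra_simps)
qed

lemma gain_has_real_derivative: "(gain s r has_real_derivative gain' s r y) (at y within S)"
  unfolding gain_def[abs_def] gain'_def
  by (auto intro!: derivative_eq_intros simp: algebra_simps power2_eq_square)

lemma gain'_has_real_derivative: "(gain' s r has_real_derivative gain'' s r y) (at y within S)"
  unfolding gain'_def[abs_def] gain''_def
  by (auto intro!: derivative_eq_intros simp: algebra_simps power2_eq_square power3_eq_cube)

lemma continuous_on_gain'': "continuous_on S (gain'' s r)"
  unfolding gain''_def[abs_def] by (intro continuous_intros entire_coeffs_diffs entire_besselI1_coeff)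

lemma continuous_on_gain: "continuous_on S (gain s r)"
  using gain_has_real_derivative
  by (meson DERIV_isCont continuous_at_imp_continuous_on)

lemma deriv_gain: "deriv (gain s r) = gain' s r"
  using DERIV_imp_deriv[OF gain_has_real_derivative] by blast

lemma deriv_gain': "deriv (gain' s r) = gain'' s r"
  using DERIV_imp_deriv[OF gain'_has_real_derivative] by blast

lemma gain'_0: "gain' s r 0 = 0"
  by (simp add: gain'_def)

section \<open>A convolution identity for the Bessel series\<close>

lemma has_integral_power_mult_power:
  fixes T :: real
  assumes "0 \<le> T"
  shows "((\<lambda>v. (T - v)^m * v^n) has_integral fact m * fact n / fact (m + n + 1) * T^(m + n + 1)) {0..T}"
  using assms
proof (induction m arbitrary: n)
  case 0
  have "((\<lambda>v. v^(n+1) / (n+1)) has_real_derivative x^n) (at x within {0..T})" for x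
    using DERIV_cdivide[OF DERIV_pow[of "n+1" x], of "n+1"] by (simp del: of_nat_Suc)
  then have "((\<lambda>v. v^n) has_integral T^(n+1) / (n+1) - 0^(n+1) / (n+1)) {0..T}"
    by (intro fundamental_theorem_of_calculus[OF 0])
       (simp add: has_real_derivative_iff_has_vector_derivative[symmetric])
  then show ?case by (simp add: field_simps del: of_nat_Suc)
next
  case (Suc m)
  define c where "c = fact m * fact (Suc n) / fact (m + Suc n + 1) * T^(m + Suc n + 1)"
  have "((\<lambda>v. ((real n + 1) * v^n) * (T - v)^Suc m) has_integral (real m + 1) * c) {0..T}"
  proof (rule integration_by_parts[OF bounded_bilinear_mult Suc.prems])
    show "((\<lambda>v. v^(n+1) * (- (real m + 1) * (T - v)^m)) has_integral
        T^(n+1) * (T - T)^Suc m - 0^(n+1) * (T - 0)^Suc m - (real m + 1) * c) {0..T}"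
      using has_integral_mult_right[OF Suc.IH[of "Suc n", OF Suc.prems, folded c_def], of "- (real m + 1)"]
      by (simp add: algebra_simps)
    show "((\<lambda>v. v^(n+1)) has_vector_derivative (real n + 1) * v^n) (at v)" for v :: real
      using DERIV_pow[of "n+1" v] by (simp add: has_real_derivative_iff_has_vector_derivative add.commute)
    show "((\<lambda>v. (T - v)^Suc m) has_vector_derivative - (real m + 1) * (T - v)^m) (at v)" for v :: real
      using DERIV_power[where n="Suc m", OF DERIV_diff[OF DERIV_const[of T] DERIV_ident]]
      by (simp add: has_real_derivative_iff_has_vector_derivative algebra_simps)
  qed (auto intro!: continuous_intros)
  moreover have "(real m + 1) * c
      = (real n + 1) * (fact (Suc m) * fact n / fact (Suc m + n + 1) * T^(Suc m + n + 1))"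
  proof -
    have "m + Suc n + 1 = Suc m + n + 1" by simp
    then show ?thesis by (simp add: c_def algebra_simps)
  qed
  ultimately have "((\<lambda>v. (real n + 1) *\<^sub>R ((T - v)^Suc m * v^n)) has_integral
      (real n + 1) *\<^sub>R (fact (Suc m) * fact n / fact (Suc m + n + 1) * T^(Suc m + n + 1))) {0..T}"
    by (simp add: mult_ac)
  then show ?case
    by (subst (asm) has_integral_cmul_iff) auto
qed

lemma fact_mult_fact_le_fact_add: "fact m * fact n \<le> (fact (m + n) :: real)"
proof (induction n)
  case (Suc n)
  have "fact m * fact (Suc n) = (n + 1) * (fact m * fact n :: real)" by (simp add: algebra_simps)
  also have "\<dots> \<le> (real (m + n) + 1) * fact (m + n)" using Suc.IH by (intro mult_mono) auto
  finally show ?case by (simp add: algebra_simps)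
qed simp

lemma alternating_sum_choose_Suc:
  "(\<Sum>m\<le>N. (-1)^m * real ((N + 2) choose (m + 1))) = 1 + (-1)^N"
proof -
  have "0 = (\<Sum>i\<le>N + 2. (-1)^i * real ((N + 2) choose i))"
    by (rule choose_alternating_sum[symmetric]) simp
  also have "\<dots> = (\<Sum>i\<le>Suc N. (-1)^i * real ((N + 2) choose i)) + (-1)^N"
    by simp
  also have "(\<Sum>i\<le>Suc N. (-1)^i * real ((N + 2) choose i))
      = 1 - (\<Sum>m\<le>N. (-1)^m * real ((N + 2) choose (m + 1)))"
    by (subst sum.atMost_Suc_shift) (simp add: sum_negf[symmetric])
  finally show ?thesis by simp
qed

lemma besselJ1_besselI1_coeff_beta_term:
  assumes "m \<le> N"
  shows "besselJ1_coeff m * besselI1_coeff (N - m) * (fact m * fact (N - m) / fact (N + 1))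
    = (1/4)^N / (4 * fact (N + 1) * fact (N + 2)) * ((-1)^m * real ((N + 2) choose (m + 1)))"
proof -
  define k where "k = N - m"
  have N: "N = m + k" using assms by (simp add: k_def)
  define C where "C = real ((N + 2) choose (m + 1))"
  have "C = fact (N + 2) / (fact (Suc m) * fact (Suc k))"
    using binomial_fact[of "m + 1" "N + 2", where 'a=real] by (simp add: C_def N del: fact_Suc)
  then show ?thesis
    unfolding k_def[symmetric] C_def[symmetric]
    by (simp add: besselJ1_coeff_eq besselI1_coeff_def N power_add field_simps
        del: fact_Suc of_nat_Suc)
qed

lemma besselJ1_besselI1_coeff_beta_sum:
  "(\<Sum>m\<le>N. besselJ1_coeff m * besselI1_coeff (N - m) * (fact m * fact (N - m) / fact (N + 1)))
    = 2 * (besselI1_coeff (Suc N) - besselJ1_coeff (Suc N))"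
proof -
  define C where "C = (1/4::real)^N / (4 * fact (N + 1) * fact (N + 2))"
  have "(\<Sum>m\<le>N. besselJ1_coeff m * besselI1_coeff (N - m) * (fact m * fact (N - m) / fact (N + 1)))
      = C * (\<Sum>m\<le>N. (-1)^m * real ((N + 2) choose (m + 1)))"
    unfolding sum_distrib_left C_def
    by (rule sum.cong[OF refl], rule besselJ1_besselI1_coeff_beta_term) simp
  also have "\<dots> = C * (1 + (-1)^N)"
    by (simp only: alternating_sum_choose_Suc)
  also have "\<dots> = 2 * besselI1_coeff (Suc N) * (1 + (-1)^N)"
    by (simp add: C_def besselI1_coeff_def del: fact_Suc)
  also have "\<dots> = 2 * (besselI1_coeff (Suc N) - besselJ1_coeff (Suc N))"
    by (simp add: besselJ1_coeff_eq algebra_simps)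
  finally show ?thesis .
qed

lemma has_sum_imp_square_sums_tendsto:
  fixes c :: "nat \<times> nat \<Rightarrow> real"
  assumes "(c has_sum S) UNIV"
  shows "(\<lambda>M. sum c ({..<M} \<times> {..<M})) \<longlonglongrightarrow> S"
proof -
  have "eventually (\<lambda>M. X \<subseteq> {..<M} \<times> {..<M}) sequentially" if "finite X" for X :: "(nat \<times> nat) set"
  proof -
    obtain M0 where "fst ` X \<union> snd ` X \<subseteq> {..<M0}"
      using \<open>finite X\<close> finite_nat_iff_bounded by blast
    then show ?thesis
      by (intro eventually_sequentiallyI[of M0]) (fastforce simp: subset_iff)
  qed
  then have "filterlim (\<lambda>M. {..<M} \<times> {..<M}) (finite_subsets_at_top UNIV) sequentially"
    unfolding filterlim_finite_subsets_at_top by (auto elim: eventually_mono)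
  from filterlim_compose[OF assms[unfolded has_sum_def] this] show ?thesis .
qed

(* The (m, n) term of int_0^T J(T - v) I(v) dv once both series are expanded. *)
definition conv_coeff :: "real \<Rightarrow> nat \<times> nat \<Rightarrow> real" where
  "conv_coeff T = (\<lambda>(m, n). besselJ1_coeff m * besselI1_coeff n
      * (fact m * fact n / fact (m + n + 1)) * T^(m + n + 1))"

lemma abs_summable_conv_coeff:
  assumes "0 \<le> T"
  shows "(\<lambda>p. norm (conv_coeff T p)) summable_on UNIV"
proof -
  define a where "a = (\<lambda>n. besselI1_coeff n * T^n)"
  have a_nonneg: "a n \<ge> 0" for n using assms by (simp add: a_def besselI1_coeff_nonneg)
  have a_sum: "(a has_sum suminf a) UNIV"
    using sums_pseries[OF entire_besselI1_coeff, of T]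
    by (intro sums_nonneg_imp_has_sum summable_sums a_nonneg) (auto simp: a_def sums_iff)
  have rows: "((\<lambda>n. a m * a n * T) has_sum a m * T * suminf a) UNIV" for m
    using has_sum_cmult_right[OF a_sum, of "a m * T"] by (simp add: mult_ac)
  have "(\<lambda>m. a m * T * suminf a) summable_on UNIV"
    using has_sum_cmult_left[OF a_sum, of "T * suminf a"] by (auto simp: summable_on_def mult_ac)
  with rows have "(\<lambda>(m, n). a m * a n * T) summable_on UNIV \<times> UNIV"
    by (intro summable_on_SigmaI[where g="\<lambda>m. a m * T * suminf a"]) (auto simp: a_nonneg assms)
  then have "(\<lambda>p. norm (case p of (m, n) \<Rightarrow> a m * a n * T)) summable_on UNIV"
    using summable_on_iff_abs_summable_on_real by auto
  then show ?thesis
  proof (rule Infinite_Sum.abs_summable_on_comparison_test)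
    fix p :: "nat \<times> nat"
    obtain m n where p: "p = (m, n)" by fastforce
    have "fact m * fact n / fact (m + n + 1) \<le> (1::real)"
      using order_trans[OF fact_mult_fact_le_fact_add fact_mono[of "m + n" "m + n + 1"]]
      by (simp del: fact_Suc)
    then have "besselI1_coeff m * besselI1_coeff n * (fact m * fact n / fact (m + n + 1)) * T^(m + n + 1)
        \<le> besselI1_coeff m * besselI1_coeff n * 1 * T^(m + n + 1)"
      using assms by (intro mult_right_mono mult_left_mono) (auto simp: besselI1_coeff_nonneg)
    then show "norm (conv_coeff T p) \<le> norm (case p of (m, n) \<Rightarrow> a m * a n * T)"
      using assms a_nonneg
      by (simp add: conv_coeff_def p a_def besselJ1_coeff_eq abs_mult besselI1_coeff_nonneg
          power_abs power_add mult_ac)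
  qed
qed

lemma conv_coeff_diagonal_sum:
  "(\<Sum>m\<le>N. conv_coeff T (m, N - m)) = 2 * (besselI1_coeff (Suc N) - besselJ1_coeff (Suc N)) * T^Suc N"
proof -
  have "(\<Sum>m\<le>N. conv_coeff T (m, N - m)) = (\<Sum>m\<le>N. besselJ1_coeff m * besselI1_coeff (N - m)
      * (fact m * fact (N - m) / fact (N + 1))) * T^(N + 1)"
    unfolding sum_distrib_right by (intro sum.cong refl) (simp add: conv_coeff_def)
  then show ?thesis by (simp only: besselJ1_besselI1_coeff_beta_sum) simp
qed

lemma conv_coeff_has_sum:
  assumes "0 \<le> T"
  shows "(conv_coeff T has_sum 2 * (pseries besselI1_coeff T - pseries besselJ1_coeff T)) UNIV"
proof -
  obtain S where S: "(conv_coeff T has_sum S) UNIV"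
    using abs_summable_summable[OF abs_summable_conv_coeff[OF assms]] by (auto simp: summable_on_def)
  \<comment> \<open>group the terms along the diagonals m + n = N\<close>
  have diag: "bij_betw (\<lambda>p. (snd p, fst p - snd p)) (SIGMA N:UNIV. {..N::nat}) UNIV"
    by (rule bij_betwI[where g="\<lambda>p::nat \<times> nat. (fst p + snd p, fst p)"]) auto
  have "((\<lambda>p. conv_coeff T (snd p, fst p - snd p)) has_sum S) (SIGMA N:UNIV. {..N})"
    using has_sum_reindex_bij_betw[OF diag, where f="conv_coeff T"] S by simp
  then have "((\<lambda>N. \<Sum>m\<le>N. conv_coeff T (m, N - m)) has_sum S) UNIV"
    by (rule has_sum_Sigma') (auto intro: has_sum_finite)
  then have "(\<lambda>N. 2 * (besselI1_coeff (Suc N) - besselJ1_coeff (Suc N)) * T^Suc N) sums S"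
    unfolding conv_coeff_diagonal_sum by (rule has_sum_imp_sums)
  moreover have "(\<lambda>N. 2 * (besselI1_coeff N - besselJ1_coeff N) * T^N)
      sums (2 * (pseries besselI1_coeff T - pseries besselJ1_coeff T))"
    using sums_mult[OF sums_diff[OF sums_pseries[OF entire_besselI1_coeff]
        sums_pseries[OF entire_besselJ1_coeff]], where c=2]
    by (simp add: algebra_simps)
  ultimately have "S = 2 * (pseries besselI1_coeff T - pseries besselJ1_coeff T)"
    by (subst (asm) sums_Suc_iff) (simp_all add: besselI1_coeff_def besselJ1_coeff_def sums_unique2)
  with S show ?thesis by simp
qed

lemma uniform_limit_pseries:
  assumes c: "entire_coeffs c" and g: "\<And>x. x \<in> S \<Longrightarrow> \<bar>g x\<bar> \<le> R"
  shows "uniform_limit S (\<lambda>M x. \<Sum>n<M. c n * g x ^ n) (\<lambda>x. pseries c (g x)) sequentially"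
  unfolding pseries_def
proof (rule Weierstrass_m_test)
  show "summable (\<lambda>n. norm (c n * R^n))"
    using c unfolding entire_coeffs_def by (intro powser_insidea[where x="\<bar>R\<bar> + 1"]) auto
  show "norm (c n * g x ^ n) \<le> norm (c n * R^n)" if "x \<in> S" for n x
    using g[OF that] by (auto simp: abs_mult power_abs intro!: mult_left_mono power_mono)
qed

lemma truncated_product_has_integral:
  assumes "0 \<le> T"
  shows "((\<lambda>v. (\<Sum>m<M. besselJ1_coeff m * (T - v)^m) * (\<Sum>n<M. besselI1_coeff n * v^n))
    has_integral sum (conv_coeff T) ({..<M} \<times> {..<M})) {0..T}"
proof -
  have "((\<lambda>v. \<Sum>m<M. \<Sum>n<M. (besselJ1_coeff m * besselI1_coeff n) * ((T - v)^m * v^n)) has_integral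
      (\<Sum>m<M. \<Sum>n<M. (besselJ1_coeff m * besselI1_coeff n)
        * (fact m * fact n / fact (m + n + 1) * T^(m + n + 1)))) {0..T}"
    by (intro has_integral_sum finite_lessThan has_integral_mult_right
        has_integral_power_mult_power assms)
  moreover have "(\<Sum>m<M. besselJ1_coeff m * (T - v)^m) * (\<Sum>n<M. besselI1_coeff n * v^n)
      = (\<Sum>m<M. \<Sum>n<M. (besselJ1_coeff m * besselI1_coeff n) * ((T - v)^m * v^n))" for v
    unfolding sum_product by (simp add: mult_ac)
  ultimately show ?thesis
    by (simp add: sum.cartesian_product conv_coeff_def split_beta mult.assoc)
qed

(* Both series are truncated at M and the finite double sum is integrated exactly; as M grows,
   the integrals converge by uniform convergence and the square partial sums by absolute
   summability of the double series. *)
theorem besselJ1_besselI1_convolution: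
  assumes T: "0 \<le> T"
  shows "integral {0..T} (\<lambda>v. pseries besselJ1_coeff (T - v) * pseries besselI1_coeff v)
    = 2 * (pseries besselI1_coeff T - pseries besselJ1_coeff T)"
proof -
  have "uniform_limit {0..T} (\<lambda>M v. (\<Sum>m<M. besselJ1_coeff m * (T - v)^m) * (\<Sum>n<M. besselI1_coeff n * v^n))
      (\<lambda>v. pseries besselJ1_coeff (T - v) * pseries besselI1_coeff v) sequentially"
    by (intro uniform_lim_mult uniform_limit_pseries[where R=T] compact_imp_bounded
        compact_continuous_image compact_Icc continuous_intros entire_besselJ1_coeff
        entire_besselI1_coeff) auto
  then obtain I J where
      I: "\<And>M. ((\<lambda>v. (\<Sum>m<M. besselJ1_coeff m * (T - v)^m) * (\<Sum>n<M. besselI1_coeff n * v^n))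
        has_integral I M) {0..T}"
    and J: "((\<lambda>v. pseries besselJ1_coeff (T - v) * pseries besselI1_coeff v) has_integral J) {0..T}"
    and "I \<longlonglongrightarrow> J"
    by (rule uniform_limit_integral) (auto intro!: continuous_intros)
  moreover have "I = (\<lambda>M. sum (conv_coeff T) ({..<M} \<times> {..<M}))"
    using has_integral_unique[OF I truncated_product_has_integral[OF T]] by auto
  ultimately have "J = 2 * (pseries besselI1_coeff T - pseries besselJ1_coeff T)"
    using has_sum_imp_square_sums_tendsto[OF conv_coeff_has_sum[OF T]] LIMSEQ_unique by blast
  with J show ?thesis by (simp add: integral_unique)
qed

(* The substitution w = s (y^2 - z^2) turns the integral into the Bessel convolution. *)
theorem kernelL_kernelK_resolvent:
  assumes s: "0 < s" and z: "0 \<le> z" "z \<le> x"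
  shows "kernelL s x z - integral {z..x} (\<lambda>y. kernelL s x y * kernelK s y z) = kernelK s x z"
proof -
  define D where "D = s * (x^2 - z^2)"
  have D: "0 \<le> D" unfolding D_def using s z by (auto intro!: mult_nonneg_nonneg power_mono)
  define f where "f w = pseries besselJ1_coeff (D - w) * pseries besselI1_coeff w" for w
  have "((\<lambda>y. (2 * s * y) *\<^sub>R f (s * (y^2 - z^2))) has_integral
      integral {s * (z^2 - z^2)..s * (x^2 - z^2)} f) {z..x}"
  proof (rule has_integral_substitution[where c=0 and d=D])
    show "(\<lambda>y. s * (y^2 - z^2)) ` {z..x} \<subseteq> {0..D}"
      using s z by (auto simp: D_def intro!: mult_left_mono power_mono)
    show "continuous_on {0..D} f"
      unfolding f_def by (intro continuous_intros entire_besselJ1_coeff entire_besselI1_coeff)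
    show "((\<lambda>y. s * (y^2 - z^2)) has_real_derivative 2 * s * y) (at y within {z..x})" for y
      by (auto intro!: derivative_eq_intros)
  qed (use D z in \<open>simp_all add: D_def\<close>)
  then have "((\<lambda>y. (s * x / 2) * ((2 * s * y) * f (s * (y^2 - z^2)))) has_integral
      (s * x / 2) * (2 * (pseries besselI1_coeff D - pseries besselJ1_coeff D))) {z..x}"
    using besselJ1_besselI1_convolution[OF D]
    by (intro has_integral_mult_right) (simp add: D_def f_def[abs_def])
  moreover have "(s * x / 2) * ((2 * s * y) * f (s * (y^2 - z^2))) = kernelL s x y * kernelK s y z" for y
  proof -
    have "D - s * (y^2 - z^2) = s * (x^2 - y^2)" by (simp add: D_def algebra_simps)
    then show ?thesis by (simp add: f_def kernelL_def kernelK_def)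
  qed
  ultimately have "integral {z..x} (\<lambda>y. kernelL s x y * kernelK s y z)
      = s * x * (pseries besselI1_coeff D - pseries besselJ1_coeff D)"
    by (simp add: integral_unique)
  then show ?thesis by (simp add: kernelL_def kernelK_def D_def algebra_simps)
qed

section \<open>Integral inequalities\<close>

lemma continuous_on_integral_variable_limit:
  fixes \<phi> :: "real \<Rightarrow> real \<Rightarrow> real"
  assumes c: "continuous_on ({0..1} \<times> {0..1}) (\<lambda>(x, y). \<phi> x y)"
  shows "continuous_on {0..1} (\<lambda>x. integral {0..x} (\<phi> x))"
proof -
  \<comment> \<open>after the substitution y = x t the domain of integration no longer depends on x\<close>
  have "integral {0..x} (\<phi> x) = integral (cbox 0 1) (\<lambda>t. x * \<phi> x (x * t))" if x: "x \<in> {0..1}" for x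
  proof -
    have "continuous_on {0..x} (\<phi> x)"
      by (rule continuous_on_compose2[OF c, of _ "\<lambda>y. (x, y)", simplified])
         (use x in \<open>auto intro!: continuous_intros\<close>)
    then have "((\<lambda>t. x *\<^sub>R \<phi> x (x * t)) has_integral integral {x * 0..x * 1} (\<phi> x)) {0..1}"
      using x by (intro has_integral_substitution[where c=0 and d=x])
        (auto intro!: derivative_eq_intros mult_left_le)
    then have "((\<lambda>t. x * \<phi> x (x * t)) has_integral integral {0..x} (\<phi> x)) (cbox 0 1)"
      by simp
    then show ?thesis by (rule integral_unique[symmetric])
  qed
  moreover have "continuous_on {0..1} (\<lambda>x. integral (cbox 0 1) (\<lambda>t. x * \<phi> x (x * t)))"
  proof (rule integral_continuous_on_param)
    have "continuous_on ({0..1} \<times> cbox 0 1) (\<lambda>p. \<phi> (fst p) (fst p * snd p))"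
      by (rule continuous_on_compose2[OF c, of _ "\<lambda>p. (fst p, fst p * snd p)", simplified])
         (auto intro!: continuous_intros mult_le_one)
    then show "continuous_on ({0..1} \<times> cbox 0 1) (\<lambda>(x, t). x * \<phi> x (x * t))"
      by (auto simp: split_beta intro!: continuous_intros)
  qed
  ultimately show ?thesis by (metis (no_types, lifting) continuous_on_cong)
qed

lemma integral_square_nonneg:
  fixes f :: "real \<Rightarrow> real"
  assumes "continuous_on {a..b} f"
  shows "0 \<le> integral {a..b} (\<lambda>x. (f x)^2)"
  by (rule integral_nonneg) (auto intro!: integrable_continuous_interval continuous_intros assms)

lemma Cauchy_Schwarz_integral:
  fixes f g :: "real \<Rightarrow> real"
  assumes f: "continuous_on {a..b} f" and g: "continuous_on {a..b} g"
  shows "(integral {a..b} (\<lambda>x. f x * g x))^2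
    \<le> integral {a..b} (\<lambda>x. (f x)^2) * integral {a..b} (\<lambda>x. (g x)^2)"
proof -
  define F G P where "F = integral {a..b} (\<lambda>x. (f x)^2)" and "G = integral {a..b} (\<lambda>x. (g x)^2)"
    and "P = integral {a..b} (\<lambda>x. f x * g x)"
  have quadratic: "0 \<le> F - 2 * l * P + l^2 * G" for l
  proof -
    have "0 \<le> integral {a..b} (\<lambda>x. (f x - l * g x)^2)"
      by (intro integral_square_nonneg continuous_intros f g)
    also have "integral {a..b} (\<lambda>x. (f x - l * g x)^2)
        = integral {a..b} (\<lambda>x. (f x)^2 - (2 * l) * (f x * g x) + l^2 * (g x)^2)"
      by (simp add: power2_eq_square algebra_simps)
    also have "\<dots> = F - 2 * l * P + l^2 * G"
      unfolding F_def G_def P_def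
      by (intro integral_unique has_integral_add has_integral_diff has_integral_mult_right
          integrable_integral integrable_continuous_interval continuous_intros f g)
    finally show ?thesis .
  qed
  have "G \<ge> 0" unfolding G_def by (rule integral_square_nonneg[OF g])
  show ?thesis
  proof (cases "G = 0")
    case True
    have "P = 0"
    proof (rule ccontr)
      assume "P \<noteq> 0"
      then show False using quadratic[of "(F + 1) / (2 * P)"] True by (simp add: field_simps)
    qed
    then show ?thesis using True by (simp add: G_def P_def)
  next
    case False
    then have "0 \<le> F * G - P^2"
      using quadratic[of "P / G"] \<open>G \<ge> 0\<close> by (simp add: field_simps power2_eq_square)
    then show ?thesis by (simp add: F_def G_def P_def)
  qed
qed

lemma integral_square_add_le:
  fixes f g :: "real \<Rightarrow> real"
  assumes f: "continuous_on {a..b} f" and g: "continuous_on {a..b} g"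
  shows "integral {a..b} (\<lambda>x. (f x + g x)^2)
    \<le> (sqrt (integral {a..b} (\<lambda>x. (f x)^2)) + sqrt (integral {a..b} (\<lambda>x. (g x)^2)))^2"
proof -
  define F G P where "F = integral {a..b} (\<lambda>x. (f x)^2)" and "G = integral {a..b} (\<lambda>x. (g x)^2)"
    and "P = integral {a..b} (\<lambda>x. f x * g x)"
  have F: "F \<ge> 0" and G: "G \<ge> 0"
    unfolding F_def G_def by (intro integral_square_nonneg f g)+
  have "P \<le> sqrt (P^2)" by simp
  also have "\<dots> \<le> sqrt (F * G)"
    unfolding F_def G_def P_def by (intro real_sqrt_le_mono Cauchy_Schwarz_integral f g)
  finally have P: "P \<le> sqrt F * sqrt G" by (simp add: real_sqrt_mult)
  have square: "(\<lambda>x. (f x + g x)^2) = (\<lambda>x. (f x)^2 + 2 * (f x * g x) + (g x)^2)"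
    by (simp add: fun_eq_iff power2_sum algebra_simps)
  have "integral {a..b} (\<lambda>x. (f x + g x)^2) = F + 2 * P + G"
    unfolding square F_def G_def P_def
    by (intro integral_unique has_integral_add has_integral_mult_right integrable_integral
        integrable_continuous_interval continuous_intros f g)
  also have "\<dots> \<le> (sqrt F + sqrt G)^2"
    using P F G by (simp add: power2_sum)
  finally show ?thesis by (simp add: F_def G_def)
qed

lemma lborel_integral_indicator_Icc:
  fixes f :: "real \<Rightarrow> real"
  assumes "continuous_on {a..b} f"
  shows "(\<integral>x. indicator {a..b} x * f x \<partial>lborel) = integral {a..b} f"
  using set_borel_integral_eq_integral(2)[OF borel_integrable_atLeastAtMost'[OF assms]]
  by (simp add: set_lebesgue_integral_def)

(* Fubini for the Lebesgue integral of psi times the indicator of the triangle. *)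
lemma integral_triangle_swap:
  fixes \<psi> :: "real \<Rightarrow> real \<Rightarrow> real"
  assumes a: "0 \<le> a" and c: "continuous_on ({0..a} \<times> {0..a}) (\<lambda>(y, z). \<psi> y z)"
  shows "integral {0..a} (\<lambda>y. integral {0..y} (\<psi> y)) = integral {0..a} (\<lambda>z. integral {z..a} (\<lambda>y. \<psi> y z))"
proof -
  define S where "S = {p :: real \<times> real. 0 \<le> snd p \<and> snd p \<le> fst p \<and> fst p \<le> a}"
  have S_sub: "S \<subseteq> {0..a} \<times> {0..a}" by (auto simp: S_def)
  have "bounded S" by (rule bounded_subset[OF _ S_sub]) (simp add: bounded_Times)
  moreover have "closed S"
    unfolding S_def by (intro closed_Collect_conj closed_Collect_le continuous_intros)
  ultimately have "compact S" by (simp add: compact_eq_bounded_closed)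
  define F where "F y z = indicator S (y, z) *\<^sub>R \<psi> y z" for y z
  have "integrable lborel (\<lambda>p. indicator S p *\<^sub>R \<psi> (fst p) (snd p))"
    using continuous_on_subset[OF c S_sub]
    by (intro borel_integrable_compact[OF \<open>compact S\<close>]) (simp add: split_beta)
  then have int: "integrable (lborel \<Otimes>\<^sub>M lborel) (case_prod F)"
    by (simp add: lborel_prod F_def split_beta')
  have slice_y: "continuous_on {0..y} (\<psi> y)" if "y \<in> {0..a}" for y
    by (rule continuous_on_compose2[OF c, of _ "\<lambda>z. (y, z)", simplified])
       (use that in \<open>auto intro!: continuous_intros\<close>)
  have slice_z: "continuous_on {z..a} (\<lambda>y. \<psi> y z)" if "z \<in> {0..a}" for z
    by (rule continuous_on_compose2[OF c, of _ "\<lambda>y. (y, z)", simplified])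
       (use that in \<open>auto intro!: continuous_intros\<close>)
  have inner_z: "(\<integral>z. F y z \<partial>lborel) = indicator {0..a} y * integral {0..y} (\<psi> y)" for y
  proof (cases "y \<in> {0..a}")
    case True
    then have "F y = (\<lambda>z. indicator {0..y} z *\<^sub>R \<psi> y z)"
      by (auto simp: F_def S_def fun_eq_iff split: split_indicator)
    with True show ?thesis by (simp add: lborel_integral_indicator_Icc slice_y)
  qed (auto simp: F_def S_def split: split_indicator)
  have inner_y: "(\<integral>y. F y z \<partial>lborel) = indicator {0..a} z * integral {z..a} (\<lambda>y. \<psi> y z)" for z
  proof (cases "z \<in> {0..a}")
    case True
    then have "(\<lambda>y. F y z) = (\<lambda>y. indicator {z..a} y *\<^sub>R \<psi> y z)"
      by (auto simp: F_def S_def fun_eq_iff split: split_indicator)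
    with True show ?thesis by (simp add: lborel_integral_indicator_Icc slice_z)
  qed (auto simp: F_def S_def split: split_indicator)
  have "(\<integral>y. (\<integral>z. F y z \<partial>lborel) \<partial>lborel) = (\<integral>z. (\<integral>y. F y z \<partial>lborel) \<partial>lborel)"
    by (rule lborel_pair.Fubini_integral[OF int, symmetric])
  moreover have "set_integrable lborel {0..a} (\<lambda>y. integral {0..y} (\<psi> y))"
    using lborel_pair.integrable_fst[OF int] by (simp add: set_integrable_def inner_z)
  moreover have "set_integrable lborel {0..a} (\<lambda>z. integral {z..a} (\<lambda>y. \<psi> y z))"
    using lborel_pair.integrable_snd[OF int] by (simp add: set_integrable_def inner_y)
  ultimately show ?thesis
    by (simp add: inner_z inner_y set_borel_integral_eq_integral(2)[symmetric] set_lebesgue_integral_def)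
qed

section \<open>The inverse backstepping transformation\<close>

lemma continuous_on_volterra:
  fixes k :: "real \<Rightarrow> real \<Rightarrow> real" and f :: "real \<Rightarrow> real"
  assumes k: "continuous_on ({0..1} \<times> {0..1}) (\<lambda>(x, y). k x y)" and f: "continuous_on {0..1} f"
  shows "continuous_on {0..1} (\<lambda>x. integral {0..x} (\<lambda>y. k x y * f y))"
proof (rule continuous_on_integral_variable_limit)
  have "continuous_on ({0..1} \<times> {0..1}) (\<lambda>p. k (fst p) (snd p) * f (snd p))"
    using k by (intro continuous_intros continuous_on_compose2[OF f]) (auto simp: split_beta)
  then show "continuous_on ({0..1} \<times> {0..1}) (\<lambda>(x, y). k x y * f y)"
    by (simp add: split_beta)
qed

lemma kernel_integral_square_le:
  fixes h w :: "real \<Rightarrow> real"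
  assumes h: "continuous_on {0..x} h" and w: "continuous_on {0..1} w" and x: "x \<in> {0..1}"
  shows "(integral {0..x} (\<lambda>y. h y * w y))^2
    \<le> integral {0..x} (\<lambda>y. (h y)^2) * integral {0..1} (\<lambda>y. (w y)^2)"
proof -
  have sub: "{0..x} \<subseteq> {0..1}" using x by auto
  have "(integral {0..x} (\<lambda>y. h y * w y))^2
      \<le> integral {0..x} (\<lambda>y. (h y)^2) * integral {0..x} (\<lambda>y. (w y)^2)"
    by (rule Cauchy_Schwarz_integral[OF h continuous_on_subset[OF w sub]])
  also have "\<dots> \<le> integral {0..x} (\<lambda>y. (h y)^2) * integral {0..1} (\<lambda>y. (w y)^2)"
    by (intro mult_left_mono integral_square_nonneg h integral_subset_le[OF sub]
        integrable_continuous_interval continuous_intros w continuous_on_subset[OF w sub]) auto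
  finally show ?thesis .
qed

theorem backstepping_inverse:
  fixes f :: "real \<Rightarrow> real"
  assumes s: "0 < s" and f: "continuous_on {0..1} f" and x: "x \<in> {0..1}"
  defines "w \<equiv> \<lambda>y. f y - integral {0..y} (\<lambda>z. kernelK s y z * f z)"
  shows "f x = w x + integral {0..x} (\<lambda>y. kernelL s x y * w y)"
proof -
  define G where "G y = integral {0..y} (\<lambda>z. kernelK s y z * f z)" for y
  have sub: "{0..x} \<subseteq> {0..1}" using x by auto
  have f': "continuous_on {0..x} f" using continuous_on_subset[OF f sub] .
  have G: "continuous_on {0..x} G"
    unfolding G_def
    by (rule continuous_on_subset[OF continuous_on_volterra[OF _ f] sub])
       (auto simp: split_beta intro!: continuous_intros)
  have "integral {0..x} (\<lambda>y. kernelL s x y * G y)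
      = integral {0..x} (\<lambda>y. integral {0..y} (\<lambda>z. kernelL s x y * kernelK s y z * f z))"
    by (simp add: G_def mult.assoc)
  also have "\<dots> = integral {0..x} (\<lambda>z. integral {z..x} (\<lambda>y. kernelL s x y * kernelK s y z * f z))"
  proof (rule integral_triangle_swap)
    show "continuous_on ({0..x} \<times> {0..x}) (\<lambda>(y, z). kernelL s x y * kernelK s y z * f z)"
      using f' by (auto simp: split_beta intro!: continuous_intros continuous_on_compose2[OF f'])
  qed (use x in auto)
  also have "\<dots> = integral {0..x} (\<lambda>z. kernelL s x z * f z - kernelK s x z * f z)"
    using kernelL_kernelK_resolvent[OF s] by (intro integral_cong) (simp add: algebra_simps)
  also have "\<dots> = integral {0..x} (\<lambda>z. kernelL s x z * f z) - G x"
    unfolding G_def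
    by (intro integral_diff integrable_continuous_interval continuous_intros f')
  finally have "integral {0..x} (\<lambda>y. kernelL s x y * G y)
      = integral {0..x} (\<lambda>z. kernelL s x z * f z) - G x" .
  moreover have "integral {0..x} (\<lambda>y. kernelL s x y * (f y - G y))
      = integral {0..x} (\<lambda>y. kernelL s x y * f y) - integral {0..x} (\<lambda>y. kernelL s x y * G y)"
    unfolding right_diff_distrib
    by (intro integral_diff integrable_continuous_interval continuous_intros f' G)
  ultimately show ?thesis by (simp add: w_def G_def[symmetric])
qed

lemma backstepping_inverse_bounds:
  fixes f w :: "real \<Rightarrow> real"
  assumes s: "0 < s" and f: "continuous_on {0..1} f"
    and w: "w = (\<lambda>x. f x - integral {0..x} (\<lambda>y. kernelK s x y * f y))"
  shows "integral {0..1} (\<lambda>x. (f x)^2)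
      \<le> (1 + sqrt (integral {0..1} (\<lambda>x. integral {0..x} (\<lambda>y. (kernelL s x y)^2))))^2
        * integral {0..1} (\<lambda>x. (w x)^2)"
    and "(f 1)^2 \<le> 2 * (w 1)^2
      + 2 * integral {0..1} (\<lambda>y. (kernelL s 1 y)^2) * integral {0..1} (\<lambda>x. (w x)^2)"
proof -
  define W where "W = integral {0..1} (\<lambda>x. (w x)^2)"
  define M where "M = integral {0..1} (\<lambda>x. integral {0..x} (\<lambda>y. (kernelL s x y)^2))"
  define Lw where "Lw x = integral {0..x} (\<lambda>y. kernelL s x y * w y)" for x
  have cw: "continuous_on {0..1} w"
    unfolding w by (intro continuous_intros f continuous_on_volterra)
      (auto simp: split_beta intro!: continuous_intros)
  have cLw: "continuous_on {0..1} Lw"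
    unfolding Lw_def
    by (rule continuous_on_volterra[OF _ cw]) (auto simp: split_beta intro!: continuous_intros)
  have f_eq: "f x = w x + Lw x" if "x \<in> {0..1}" for x
    using backstepping_inverse[OF s f that] by (simp add: w Lw_def)
  have Lw_le: "(Lw x)^2 \<le> integral {0..x} (\<lambda>y. (kernelL s x y)^2) * W" if "x \<in> {0..1}" for x
    unfolding Lw_def W_def
    by (rule kernel_integral_square_le[OF _ cw that]) (auto intro!: continuous_intros)
  have "integral {0..1} (\<lambda>x. (Lw x)^2) \<le> integral {0..1} (\<lambda>x. integral {0..x} (\<lambda>y. (kernelL s x y)^2) * W)"
    using Lw_le
    by (intro integral_le integrable_continuous_interval continuous_intros cLw
        continuous_on_integral_variable_limit) (auto simp: split_beta intro!: continuous_intros)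
  then have LwM: "integral {0..1} (\<lambda>x. (Lw x)^2) \<le> M * W" by (simp add: M_def)
  have "integral {0..1} (\<lambda>x. (f x)^2) = integral {0..1} (\<lambda>x. (w x + Lw x)^2)"
    by (intro integral_cong) (simp add: f_eq)
  also have "\<dots> \<le> (sqrt W + sqrt (integral {0..1} (\<lambda>x. (Lw x)^2)))^2"
    unfolding W_def by (rule integral_square_add_le[OF cw cLw])
  also have "\<dots> \<le> (sqrt W + sqrt (M * W))^2"
    using LwM integral_square_nonneg[OF cw] integral_square_nonneg[OF cLw]
    by (intro power_mono add_left_mono real_sqrt_le_mono) (auto simp: W_def)
  also have "\<dots> = (1 + sqrt M)^2 * W"
    using integral_square_nonneg[OF cw]
    by (simp add: W_def real_sqrt_mult power2_eq_square algebra_simps)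
  finally show "integral {0..1} (\<lambda>x. (f x)^2) \<le> (1 + sqrt M)^2 * W" .
  have "(f 1)^2 = (w 1 + Lw 1)^2" by (simp add: f_eq)
  also have "\<dots> \<le> 2 * (w 1)^2 + 2 * (Lw 1)^2"
    using sum_squares_bound[of "w 1" "Lw 1"] by (simp add: power2_sum)
  finally show "(f 1)^2 \<le> 2 * (w 1)^2 + 2 * integral {0..1} (\<lambda>y. (kernelL s 1 y)^2) * W"
    using Lw_le[of 1] by simp
qed

section \<open>The derivative of the holding error\<close>

lemma has_integral_mult_second_derivative:
  fixes k k' k'' f f' f'' :: "real \<Rightarrow> real"
  assumes ab: "a \<le> b"
    and k': "\<And>y. y \<in> {a..b} \<Longrightarrow> (k has_real_derivative k' y) (at y within {a..b})"
    and k'': "\<And>y. y \<in> {a..b} \<Longrightarrow> (k' has_real_derivative k'' y) (at y within {a..b})"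
    and k''_cont: "continuous_on {a..b} k''"
    and f': "\<And>y. y \<in> {a..b} \<Longrightarrow> (f has_real_derivative f' y) (at y within {a..b})"
    and f'': "\<And>y. y \<in> {a..b} \<Longrightarrow> (f' has_real_derivative f'' y) (at y within {a..b})"
  shows "((\<lambda>y. k y * f'' y) has_integral
    k b * f' b - k a * f' a - k' b * f b + k' a * f a + integral {a..b} (\<lambda>y. k'' y * f y)) {a..b}"
proof -
  have "((\<lambda>y. k y * f'' y - k'' y * f y) has_integral
      (k b * f' b - k' b * f b) - (k a * f' a - k' a * f a)) {a..b}"
  proof (rule fundamental_theorem_of_calculus[OF ab])
    fix y assume y: "y \<in> {a..b}"
    have "((\<lambda>y. k y * f' y - k' y * f y) has_real_derivative
        (k' y * f' y + f'' y * k y) - (k'' y * f y + f' y * k' y)) (at y within {a..b})"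
      by (intro DERIV_diff DERIV_mult k' k'' f' f'' y)
    then show "((\<lambda>y. k y * f' y - k' y * f y) has_vector_derivative k y * f'' y - k'' y * f y)
        (at y within {a..b})"
      by (simp add: has_real_derivative_iff_has_vector_derivative[symmetric] algebra_simps)
  qed
  moreover have "(\<lambda>y. k'' y * f y) integrable_on {a..b}"
    using DERIV_continuous_on[OF f'] by (intro integrable_continuous_interval continuous_intros k''_cont)
  ultimately have "((\<lambda>y. (k y * f'' y - k'' y * f y) + k'' y * f y) has_integral
      ((k b * f' b - k' b * f b) - (k a * f' a - k' a * f a)) + integral {a..b} (\<lambda>y. k'' y * f y)) {a..b}"
    by (intro has_integral_add integrable_integral)
  then show ?thesis by (simp add: algebra_simps)
qed

lemma holding_error_has_real_derivative:
  fixes k v0 :: "real \<Rightarrow> real" and v vt :: "real \<Rightarrow> real \<Rightarrow> real"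
  assumes k: "continuous_on {a..b} k" and v0: "continuous_on {a..b} v0"
    and I: "open I" "convex I" "t \<in> I"
    and v_t: "\<And>y \<tau>. y \<in> {a..b} \<Longrightarrow> \<tau> \<in> I \<Longrightarrow> ((\<lambda>\<tau>. v y \<tau>) has_real_derivative vt y \<tau>) (at \<tau>)"
    and vt_cont: "continuous_on ({a..b} \<times> I) (\<lambda>(y, \<tau>). vt y \<tau>)"
    and v_cont: "\<And>\<tau>. \<tau> \<in> I \<Longrightarrow> continuous_on {a..b} (\<lambda>y. v y \<tau>)"
  shows "((\<lambda>\<tau>. integral {a..b} (\<lambda>y. k y * (v0 y - v y \<tau>))) has_real_derivative
    - integral {a..b} (\<lambda>y. k y * vt y t)) (at t)"
proof -
  have "((\<lambda>\<tau>. integral (cbox a b) (\<lambda>y. k y * (v0 y - v y \<tau>))) has_real_derivative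
      integral (cbox a b) (\<lambda>y. - (k y * vt y t))) (at t within I)"
  proof (rule leibniz_rule_field_derivative[OF _ _ _ \<open>t \<in> I\<close> \<open>convex I\<close>])
    show "((\<lambda>\<tau>. k y * (v0 y - v y \<tau>)) has_real_derivative - (k y * vt y \<tau>)) (at \<tau> within I)"
      if "\<tau> \<in> I" "y \<in> cbox a b" for \<tau> y
    proof -
      have "((\<lambda>\<tau>. k y * (v0 y - v y \<tau>)) has_real_derivative k y * (0 - vt y \<tau>)) (at \<tau>)"
        using that by (intro DERIV_cmult DERIV_diff DERIV_const v_t) auto
      then show ?thesis by (simp add: has_field_derivative_at_within)
    qed
    show "(\<lambda>y. k y * (v0 y - v y \<tau>)) integrable_on cbox a b" if "\<tau> \<in> I" for \<tau>
      unfolding cbox_interval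
      by (intro integrable_continuous_interval continuous_intros k v0 v_cont that)
    have "continuous_on (I \<times> cbox a b) (\<lambda>p. vt (snd p) (fst p))"
      by (rule continuous_on_compose2[OF vt_cont, of _ "\<lambda>p. (snd p, fst p)", simplified])
         (auto intro!: continuous_on_Pair continuous_on_snd continuous_on_fst continuous_on_id)
    moreover have "continuous_on (I \<times> cbox a b) (\<lambda>p. k (snd p))"
      by (rule continuous_on_compose2[OF k]) (auto intro: continuous_on_snd continuous_on_id)
    ultimately show "continuous_on (I \<times> cbox a b) (\<lambda>(\<tau>, y). - (k y * vt y \<tau>))"
      by (auto simp: split_beta intro!: continuous_intros)
  qed
  then show ?thesis
    by (simp add: at_within_open[OF \<open>t \<in> I\<close> \<open>open I\<close>] cbox_interval)
qed

(* Cauchy-Schwarz with weights 6, 3, 3, 6, whose reciprocals add up to 1, in Lagrange form. *)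
lemma weighted_square_sum_le:
  fixes a b c e :: real
  shows "(a + b + c + e)^2 \<le> 6 * a^2 + 3 * b^2 + 3 * c^2 + 6 * e^2"
proof -
  have "6 * a^2 + 3 * b^2 + 3 * c^2 + 6 * e^2 - (a + b + c + e)^2
      = (2*a - b)^2 / 2 + (2*a - c)^2 / 2 + (a - e)^2 + (b - c)^2 + (b - 2*e)^2 / 2 + (c - 2*e)^2 / 2"
    by (simp add: power2_eq_square field_simps)
  moreover have "0 \<le> (2*a - b)^2 / 2 + (2*a - c)^2 / 2 + (a - e)^2 + (b - c)^2
      + (b - 2*e)^2 / 2 + (c - 2*e)^2 / 2"
    by (intro add_nonneg_nonneg) auto
  ultimately show ?thesis by linarith
qed

lemma observer_gain_integral_identity:
  fixes eps lam q e0 :: real and k k' k'' h hx hxx ht h0 p :: "real \<Rightarrow> real"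
  assumes eps: "eps \<noteq> 0"
    and k': "\<And>y. y \<in> {0..1} \<Longrightarrow> (k has_real_derivative k' y) (at y within {0..1})"
    and k'': "\<And>y. y \<in> {0..1} \<Longrightarrow> (k' has_real_derivative k'' y) (at y within {0..1})"
    and k''_cont: "continuous_on {0..1} k''" and k'_0: "k' 0 = 0"
    and hx: "\<And>y. y \<in> {0..1} \<Longrightarrow> (h has_real_derivative hx y) (at y within {0..1})"
    and hxx: "\<And>y. y \<in> {0..1} \<Longrightarrow> (hx has_real_derivative hxx y) (at y within {0..1})"
    and ht_cont: "continuous_on {0..1} ht" and h0_cont: "continuous_on {0..1} h0"
    and pde: "\<And>y. y \<in> {0..1} \<Longrightarrow> ht y = eps * hxx y + lam * h y + p y * e0"
    and bc0: "hx 0 = - lam / (2 * eps) * e0"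
    and bc1: "hx 1 + q * h 1 = integral {0..1} (\<lambda>y. k y * h0 y)"
  shows "integral {0..1} (\<lambda>y. k y * ht y)
    = eps * k 1 * integral {0..1} (\<lambda>y. k y * (h0 y - h y))
      + integral {0..1} (\<lambda>y. (eps * k'' y + eps * k 1 * k y + lam * k y) * h y)
      - (eps * q * k 1 + eps * k' 1) * h 1
      + (lam * k 0 / 2 + integral {0..1} (\<lambda>y. k y * p y)) * e0"
proof -
  have k_cont: "continuous_on {0..1} k" by (rule DERIV_continuous_on[OF k'])
  have h_cont: "continuous_on {0..1} h" by (rule DERIV_continuous_on[OF hx])
  note integrable = integrable_continuous_interval continuous_intros k_cont h_cont h0_cont ht_cont k''_cont
  define Ikh where "Ikh = integral {0..1} (\<lambda>y. k y * h y)"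
  define Ik''h where "Ik''h = integral {0..1} (\<lambda>y. k'' y * h y)"
  have ibp: "((\<lambda>y. k y * hxx y) has_integral
      k 1 * hx 1 - k 0 * hx 0 - k' 1 * h 1 + k' 0 * h 0 + Ik''h) {0..1}"
    unfolding Ik''h_def by (rule has_integral_mult_second_derivative[OF _ k' k'' k''_cont hx hxx]) auto
  have "(\<lambda>y. k y * hxx y) integrable_on {0..1}" using ibp by blast
  then have main_int: "(\<lambda>y. eps * (k y * hxx y) + lam * (k y * h y)) integrable_on {0..1}"
    by (intro integrable_add integrable_on_mult_right) (auto intro!: integrable)
  \<comment> \<open>p is not assumed regular: e0 k p is integrable as a difference of integrable terms\<close>
  have "(\<lambda>y. e0 * (k y * p y)) integrable_on {0..1}"
    by (rule integrable_eq[OF integrable_diff[OF _ main_int], of "\<lambda>y. k y * ht y"])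
       (auto intro!: integrable simp: pde algebra_simps)
  have "integral {0..1} (\<lambda>y. k y * ht y)
      = integral {0..1} (\<lambda>y. (eps * (k y * hxx y) + lam * (k y * h y)) + e0 * (k y * p y))"
    by (intro integral_cong) (simp add: pde algebra_simps)
  also have "\<dots> = integral {0..1} (\<lambda>y. eps * (k y * hxx y) + lam * (k y * h y))
      + e0 * integral {0..1} (\<lambda>y. k y * p y)"
    using integral_add[OF main_int \<open>(\<lambda>y. e0 * (k y * p y)) integrable_on {0..1}\<close>] by simp
  also have "integral {0..1} (\<lambda>y. eps * (k y * hxx y) + lam * (k y * h y))
      = eps * (k 1 * hx 1 - k 0 * hx 0 - k' 1 * h 1 + k' 0 * h 0 + Ik''h) + lam * Ikh"
    unfolding Ikh_def using ibp
    by (intro integral_unique has_integral_add has_integral_mult_right integrable_integral integrable)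
  finally have kht: "integral {0..1} (\<lambda>y. k y * ht y)
      = eps * (k 1 * hx 1 - k 0 * hx 0 - k' 1 * h 1 + k' 0 * h 0 + Ik''h) + lam * Ikh
        + e0 * integral {0..1} (\<lambda>y. k y * p y)" .
  have diff: "integral {0..1} (\<lambda>y. k y * (h0 y - h y)) = (hx 1 + q * h 1) - Ikh"
    unfolding bc1 Ikh_def right_diff_distrib by (intro integral_diff integrable)
  have comb: "integral {0..1} (\<lambda>y. (eps * k'' y + eps * k 1 * k y + lam * k y) * h y)
      = eps * Ik''h + eps * k 1 * Ikh + lam * Ikh"
    unfolding Ik''h_def Ikh_def distrib_right mult.assoc
    by (intro integral_unique has_integral_add has_integral_mult_right integrable_integral integrable)
  show ?thesis
    unfolding kht diff comb bc0 k'_0 using eps by (simp add: field_simps)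
qed

lemma holding_error_derivative_bound:
  fixes eps lam q e0 :: real and h hx hxx ht h0 p :: "real \<Rightarrow> real"
  defines "k \<equiv> kgain eps lam q"
    and "wh \<equiv> \<lambda>x. h x - integral {0..x} (\<lambda>y. kerK eps lam x y * h y)"
  assumes eps: "eps > 0" and lam: "lam > 0"
    and hx: "\<And>y. y \<in> {0..1} \<Longrightarrow> (h has_real_derivative hx y) (at y within {0..1})"
    and hxx: "\<And>y. y \<in> {0..1} \<Longrightarrow> (hx has_real_derivative hxx y) (at y within {0..1})"
    and ht_cont: "continuous_on {0..1} ht" and h0_cont: "continuous_on {0..1} h0"
    and pde: "\<And>y. y \<in> {0..1} \<Longrightarrow> ht y = eps * hxx y + lam * h y + p y * e0"
    and bc0: "hx 0 = p10gain eps lam * e0"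
    and bc1: "hx 1 + q * h 1 = integral {0..1} (\<lambda>y. k y * h0 y)"
  shows "(integral {0..1} (\<lambda>y. k y * ht y))^2 \<le>
        6 * eps^2 * (k 1)^2 * (integral {0..1} (\<lambda>y. k y * (h0 y - h y)))^2
      + (3 * (1 + sqrt (integral {0..1} (\<lambda>x. integral {0..x} (\<lambda>y. (kerL eps lam x y)^2))))^2
           * integral {0..1} (\<lambda>y. (eps * deriv (deriv k) y + eps * k 1 * k y + lam * k y)^2)
         + 6 * (eps * q * k 1 + eps * deriv k 1)^2 * integral {0..1} (\<lambda>y. (kerL eps lam 1 y)^2))
        * integral {0..1} (\<lambda>x. (wh x)^2)
      + 6 * (eps * q * k 1 + eps * deriv k 1)^2 * (wh 1)^2
      + 6 * (lam * k 0 / 2 + integral {0..1} (\<lambda>y. k y * p y))^2 * e0^2"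
proof -
  define s r where "s = lam / eps" and "r = rpar eps lam q"
  have s: "0 < s" using eps lam by (simp add: s_def)
  have k: "k = gain s r" by (simp add: k_def s_def r_def kgain_eq_gain)
  define g where "g y = eps * gain'' s r y + eps * k 1 * k y + lam * k y" for y
  define C where "C = eps * q * k 1 + eps * gain' s r 1"
  define E where "E = lam * k 0 / 2 + integral {0..1} (\<lambda>y. k y * p y)"
  define W where "W = integral {0..1} (\<lambda>x. (wh x)^2)"
  define M where "M = integral {0..1} (\<lambda>x. integral {0..x} (\<lambda>y. (kernelL s x y)^2))"
  define \<Lambda> where "\<Lambda> = integral {0..1} (\<lambda>y. (kernelL s 1 y)^2)"
  define G where "G = integral {0..1} (\<lambda>y. (g y)^2)"
  have h_cont: "continuous_on {0..1} h" by (rule DERIV_continuous_on[OF hx])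
  have g_cont: "continuous_on {0..1} g"
    unfolding g_def k by (intro continuous_intros continuous_on_gain continuous_on_gain'')
  have wh: "wh = (\<lambda>x. h x - integral {0..x} (\<lambda>y. kernelK s x y * h y))"
    by (simp add: wh_def s_def kerK_eq_kernelK)
  note bounds = backstepping_inverse_bounds[OF s h_cont wh, folded W_def M_def \<Lambda>_def]
  define D where "D = integral {0..1} (\<lambda>y. k y * (h0 y - h y))"
  define B where "B = integral {0..1} (\<lambda>y. g y * h y)"
  have "integral {0..1} (\<lambda>y. k y * ht y) = eps * k 1 * D + B + - (C * h 1) + E * e0"
    unfolding D_def B_def g_def C_def E_def k
    using eps bc0 bc1[unfolded k]
    by (subst observer_gain_integral_identity[where k'="gain' s r" and k''="gain'' s r"])
       (auto intro: gain_has_real_derivative gain'_has_real_derivative continuous_on_gain''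
         hx hxx ht_cont h0_cont pde gain'_0 simp: p10gain_def)
  then have "(integral {0..1} (\<lambda>y. k y * ht y))^2
      \<le> 6 * (eps * k 1 * D)^2 + 3 * B^2 + 3 * (C * h 1)^2 + 6 * (E * e0)^2"
    using weighted_square_sum_le[of "eps * k 1 * D" B "- (C * h 1)" "E * e0"] by simp
  moreover have "B^2 \<le> G * ((1 + sqrt M)^2 * W)"
    unfolding B_def G_def
    by (rule order_trans[OF Cauchy_Schwarz_integral[OF g_cont h_cont]])
       (intro mult_left_mono bounds(1) integral_square_nonneg g_cont)
  moreover have "(C * h 1)^2 \<le> C^2 * (2 * (wh 1)^2 + 2 * \<Lambda> * W)"
    unfolding power_mult_distrib by (intro mult_left_mono bounds(2)) auto
  moreover have "3 * (G * ((1 + sqrt M)^2 * W)) + 3 * (C^2 * (2 * (wh 1)^2 + 2 * \<Lambda> * W))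
      = (3 * (1 + sqrt M)^2 * G + 6 * C^2 * \<Lambda>) * W + 6 * C^2 * (wh 1)^2"
    by (simp add: algebra_simps)
  ultimately have "(integral {0..1} (\<lambda>y. k y * ht y))^2 \<le> 6 * eps^2 * (k 1)^2 * D^2
      + (3 * (1 + sqrt M)^2 * G + 6 * C^2 * \<Lambda>) * W + 6 * C^2 * (wh 1)^2 + 6 * E^2 * e0^2"
    by (simp add: power_mult_distrib)
  then show ?thesis
    unfolding D_def G_def g_def C_def E_def W_def M_def \<Lambda>_def k deriv_gain deriv_gain'
      kerL_eq_kernelL s_def .
qed

theorem lemma2:
  fixes eps lam q :: real
    and u ux uxx ut uh uhx uhxx uht :: "real \<Rightarrow> real \<Rightarrow> real"
    and tt :: "nat \<Rightarrow> real"
  defines "k \<equiv> kgain eps lam q"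
    and "U \<equiv> (\<lambda>j. integral {0..1} (\<lambda>y. kgain eps lam q y * uh y (tt j)))"
    and "wh \<equiv> (\<lambda>x t. uh x t - integral {0..x} (\<lambda>y. kerK eps lam x y * uh y t))"
    and "wt \<equiv> (\<lambda>x t. (u x t - uh x t)
                 + integral {0..x} (\<lambda>y. kerQ eps lam q x y * (u y t - uh y t)))"
    and "d \<equiv> (\<lambda>j t. integral {0..1} (\<lambda>y. kgain eps lam q y * (uh y (tt j) - uh y t)))"
  assumes eps_pos: "eps > 0" and lam_pos: "lam > 0"
    and q_bound: "q > (lam + eps) / (2 * eps)"
    and tt0: "tt 0 = 0" and tt_mono: "strict_mono tt"
    \<comment> \<open>regularity of the plant and observer states on each sampling interval\<close>
    and u_x: "\<And>j t x. t \<in> {tt j<..<tt (Suc j)} \<Longrightarrow> x \<in> {0..1} \<Longrightarrow>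
               ((\<lambda>x. u x t) has_real_derivative ux x t) (at x within {0..1})"
    and u_xx: "\<And>j t x. t \<in> {tt j<..<tt (Suc j)} \<Longrightarrow> x \<in> {0..1} \<Longrightarrow>
               ((\<lambda>x. ux x t) has_real_derivative uxx x t) (at x within {0..1})"
    and u_t: "\<And>j t x. t \<in> {tt j<..<tt (Suc j)} \<Longrightarrow> x \<in> {0..1} \<Longrightarrow>
               ((\<lambda>s. u x s) has_real_derivative ut x t) (at t)"
    and uh_x: "\<And>j t x. t \<in> {tt j<..<tt (Suc j)} \<Longrightarrow> x \<in> {0..1} \<Longrightarrow>
               ((\<lambda>x. uh x t) has_real_derivative uhx x t) (at x within {0..1})"
    and uh_xx: "\<And>j t x. t \<in> {tt j<..<tt (Suc j)} \<Longrightarrow> x \<in> {0..1} \<Longrightarrow>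
               ((\<lambda>x. uhx x t) has_real_derivative uhxx x t) (at x within {0..1})"
    and uh_t: "\<And>j t x. t \<in> {tt j<..<tt (Suc j)} \<Longrightarrow> x \<in> {0..1} \<Longrightarrow>
               ((\<lambda>s. uh x s) has_real_derivative uht x t) (at t)"
    and uh_t_cont: "\<And>j. continuous_on ({0..1} \<times> {tt j<..<tt (Suc j)}) (\<lambda>(x, t). uht x t)"
    and uh_sample_cont: "\<And>j. continuous_on {0..1} (\<lambda>x. uh x (tt j))"
    \<comment> \<open>plant\<close>
    and plant_pde: "\<And>j t x. t \<in> {tt j<..<tt (Suc j)} \<Longrightarrow> x \<in> {0..1} \<Longrightarrow>
               ut x t = eps * uxx x t + lam * u x t"
    and plant_bc0: "\<And>j t. t \<in> {tt j<..<tt (Suc j)} \<Longrightarrow> ux 0 t = 0"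
    and plant_bc1: "\<And>j t. t \<in> {tt j<..<tt (Suc j)} \<Longrightarrow> ux 1 t + q * u 1 t = U j"
    \<comment> \<open>observer\<close>
    and obs_pde: "\<And>j t x. t \<in> {tt j<..<tt (Suc j)} \<Longrightarrow> x \<in> {0..1} \<Longrightarrow>
               uht x t = eps * uhxx x t + lam * uh x t + p1gain eps lam q x * (u 0 t - uh 0 t)"
    and obs_bc0: "\<And>j t. t \<in> {tt j<..<tt (Suc j)} \<Longrightarrow>
               uhx 0 t = p10gain eps lam * (u 0 t - uh 0 t)"
    and obs_bc1: "\<And>j t. t \<in> {tt j<..<tt (Suc j)} \<Longrightarrow> uhx 1 t + q * uh 1 t = U j"
  shows "\<forall>j. \<forall>t \<in> {tt j<..<tt (Suc j)}.
     d j differentiable (at t) \<and>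
     (deriv (d j) t)^2 \<le>
        6 * eps^2 * (k 1)^2 * (d j t)^2
      + (3 * (1 + sqrt (integral {0..1} (\<lambda>x. integral {0..x} (\<lambda>y. (kerL eps lam x y)^2))))^2
           * integral {0..1} (\<lambda>y. (eps * deriv (deriv k) y + eps * k 1 * k y + lam * k y)^2)
         + 6 * (eps * q * k 1 + eps * deriv k 1)^2 * integral {0..1} (\<lambda>y. (kerL eps lam 1 y)^2))
        * integral {0..1} (\<lambda>x. (wh x t)^2)
      + 6 * (eps * q * k 1 + eps * deriv k 1)^2 * (wh 1 t)^2
      + 6 * (lam * k 0 / 2 + integral {0..1} (\<lambda>y. k y * p1gain eps lam q y))^2 * (wt 0 t)^2"
proof -
  let "\<forall>j. \<forall>t\<in>?I j. ?claim j t" = ?thesis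
  have k_cont: "continuous_on {0..1} k"
    unfolding k_def kgain_eq_gain by (rule continuous_on_gain)
  have "?claim j t" if t: "t \<in> ?I j" for j t
  proof -
    have uh_cont: "continuous_on {0..1} (\<lambda>y. uh y \<tau>)" if "\<tau> \<in> ?I j" for \<tau>
      using uh_x[OF that] by (rule DERIV_continuous_on)
    have uht_cont: "continuous_on {0..1} (\<lambda>y. uht y t)"
      by (rule continuous_on_compose2[OF uh_t_cont[of j], of _ "\<lambda>y. (y, t)", simplified])
         (use t in \<open>auto intro!: continuous_intros\<close>)
    have D: "(d j has_real_derivative - integral {0..1} (\<lambda>y. k y * uht y t)) (at t)"
      unfolding d_def k_def[symmetric]
      by (rule holding_error_has_real_derivative[OF k_cont uh_sample_cont _ _ t uh_t uh_t_cont uh_cont])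
         auto
    have bc1: "uhx 1 t + q * uh 1 t = integral {0..1} (\<lambda>y. kgain eps lam q y * uh y (tt j))"
      using obs_bc1[OF t] by (simp add: U_def)
    have wt0: "wt 0 t = u 0 t - uh 0 t" by (simp add: wt_def)
    show ?thesis
      using holding_error_derivative_bound[OF eps_pos lam_pos uh_x[OF t] uh_xx[OF t] uht_cont
          uh_sample_cont obs_pde[OF t] obs_bc0[OF t] bc1] D
      unfolding DERIV_imp_deriv[OF D] wt0
      by (auto simp: k_def d_def wh_def real_differentiable_def)
  qed
  then show ?thesis by blast
qed

end
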